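(* Let $A$ be a finite set. Then every irreducible sofic subshift $X \subset A^{\mathbb Z}$ is a W-subshift. In particular, every irreducible subshift of finite type $X\subset A^{\mathbb Z}$ is a W-subshift.
   Context: A subshift of $A^{\mathbb Z}$ is a closed shift-invariant subset. $X$ is of finite type if there are a finite $\Omega\subset\mathbb Z$ and $\mathcal P\subset A^\Omega$ with $X=\{x:(gx)|_\Omega\in\mathcal P\ \forall g\in\mathbb Z\}$, where $(gx)(h)=x(h-g)$. $X$ is sofic if there are a finite set $B$, a subshift of finite type $Y\subset B^{\mathbb Z}$ and a surjective continuous shift-equivariant map $Y\to X$. $L(X)$ is the set of finite words (including the empty word) appearing as $x(i)\cdots x(j)$ in some $x\in X$; $|w|$ is word length. $X$ is irreducible if for all $u,v\in L(X)$ there is $w\in L(X)$ with $uwv\in L(X)$. $X$ is a W-subshift if there is an integer $n_0\ge0$ such that for all $u,v\in L(X)$ there is $c\in L(X)$ with $|c|\le n_0$ and $ucv\in L(X)$. *)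

theory Defs
  imports "HOL-Library.FuncSet"
begin

definition full_shift :: "'a set \<Rightarrow> (int \<Rightarrow> 'a) set" where
  "full_shift A = {x. \<forall>i. x i \<in> A}"

definition shift :: "int \<Rightarrow> (int \<Rightarrow> 'a) \<Rightarrow> (int \<Rightarrow> 'a)" where
  "shift g x = (\<lambda>h. x (h - g))"

definition shift_invariant :: "(int \<Rightarrow> 'a) set \<Rightarrow> bool" where
  "shift_invariant X \<longleftrightarrow> (\<forall>g. \<forall>x\<in>X. shift g x \<in> X)"

text \<open>Closedness in the prodiscrete topology: X contains every configuration
  all of whose finite windows are matched by some element of X.\<close>
definition closed_cfg :: "(int \<Rightarrow> 'a) set \<Rightarrow> bool" where
  "closed_cfg X \<longleftrightarrow>
     (\<forall>x. (\<forall>F. finite F \<longrightarrow> (\<exists>y\<in>X. \<forall>i\<in>F. y i = x i)) \<longrightarrow> x \<in> X)"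

definition subshift :: "'a set \<Rightarrow> (int \<Rightarrow> 'a) set \<Rightarrow> bool" where
  "subshift A X \<longleftrightarrow> X \<subseteq> full_shift A \<and> closed_cfg X \<and> shift_invariant X"

definition is_SFT :: "'a set \<Rightarrow> (int \<Rightarrow> 'a) set \<Rightarrow> bool" where
  "is_SFT A X \<longleftrightarrow> subshift A X \<and>
     (\<exists>\<Omega> P. finite \<Omega> \<and> P \<subseteq> (\<Omega> \<rightarrow>\<^sub>E A) \<and>
        X = {x \<in> full_shift A. \<forall>g. restrict (shift g x) \<Omega> \<in> P})"

text \<open>Continuity of a map between configuration sets (prodiscrete topology, relative to Y).\<close>
definition cont_cfg :: "(int \<Rightarrow> 'b) set \<Rightarrow> ((int \<Rightarrow> 'b) \<Rightarrow> (int \<Rightarrow> 'a)) \<Rightarrow> bool" where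
  "cont_cfg Y \<phi> \<longleftrightarrow> (\<forall>y\<in>Y. \<forall>F. finite F \<longrightarrow>
     (\<exists>G. finite G \<and> (\<forall>z\<in>Y. (\<forall>i\<in>G. z i = y i) \<longrightarrow> (\<forall>i\<in>F. \<phi> z i = \<phi> y i))))"

text \<open>Sofic: factor of an SFT over some finite alphabet B (taken w.l.o.g. as a set of naturals).\<close>
definition sofic :: "'a set \<Rightarrow> (int \<Rightarrow> 'a) set \<Rightarrow> bool" where
  "sofic A X \<longleftrightarrow> subshift A X \<and>
     (\<exists>(B::nat set) Y (\<phi>::(int \<Rightarrow> nat) \<Rightarrow> (int \<Rightarrow> 'a)).
        finite B \<and> is_SFT B Y \<and> \<phi> ` Y = X \<and> cont_cfg Y \<phi> \<and>
        (\<forall>g. \<forall>y\<in>Y. \<phi> (shift g y) = shift g (\<phi> y)))"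

text \<open>Language: finite words x(i)...x(j) occurring in some x \<in> X (including the empty word).\<close>
definition lang :: "(int \<Rightarrow> 'a) set \<Rightarrow> 'a list set" where
  "lang X = {w. \<exists>x\<in>X. \<exists>i. w = map (\<lambda>k. x (i + int k)) [0..<length w]}"

definition irreducible_shift :: "(int \<Rightarrow> 'a) set \<Rightarrow> bool" where
  "irreducible_shift X \<longleftrightarrow> (\<forall>u\<in>lang X. \<forall>v\<in>lang X. \<exists>w\<in>lang X. u @ w @ v \<in> lang X)"

definition W_subshift :: "(int \<Rightarrow> 'a) set \<Rightarrow> bool" where
  "W_subshift X \<longleftrightarrow> (\<exists>n0::nat. \<forall>u\<in>lang X. \<forall>v\<in>lang X.
      \<exists>c\<in>lang X. length c \<le> n0 \<and> u @ c @ v \<in> lang X)"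

end

theory Submission
  imports Defs "HOL-Library.Infinite_Set"
begin

text \<open>Irreducibility joins any two words u, v by a connecting word; the connector can be chosen of
  bounded length as soon as there are only finitely many follower and predecessor sets, because a
  connector for one pair (u', v') also connects every pair (u, v) where u has the follower set of u'
  and v the predecessor set of v'.
  A sofic shift is the image of an SFT Y under a shift-commuting continuous map, which by compactness
  is a sliding block code of some radius M. If the forbidden patterns of Y live in [-D, D], two
  points of Y that agree on [-(M + 2D), M + 2D] can be spliced at the origin without leaving Y, and
  the image of the splice agrees with the left point on the negative and with the right point on the
  nonnegative coordinates. Hence the follower set of u depends only on the set of central patterns of
  points whose image reads u just left of the origin, a subset of a finite set; symmetrically for
  predecessor sets. An SFT is the image of itself under the identity.\<close>

definition word_at :: "(int \<Rightarrow> 'a) \<Rightarrow> int \<Rightarrow> nat \<Rightarrow> 'a list" where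
  "word_at x i n = map (\<lambda>k. x (i + int k)) [0..<n]"

lemma length_word_at [simp]: "length (word_at x i n) = n"
  by (simp add: word_at_def)

lemma word_at_add: "word_at x i (n + m) = word_at x i n @ word_at x (i + int n) m"
  by (induction m) (auto simp: word_at_def algebra_simps)

lemma word_at_cong: "(\<And>k. k < n \<Longrightarrow> x (i + int k) = y (i + int k)) \<Longrightarrow> word_at x i n = word_at y i n"
  by (simp add: word_at_def)

lemma word_at_shift: "word_at (shift g x) i n = word_at x (i - g) n"
  by (simp add: word_at_def shift_def algebra_simps)

lemma lang_iff_word_at: "w \<in> lang X \<longleftrightarrow> (\<exists>x\<in>X. \<exists>i. word_at x i (length w) = w)"
  unfolding lang_def word_at_def mem_Collect_eq by (metis (no_types, lifting))

lemma lang_shift_invariant_iff: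
  assumes "shift_invariant X"
  shows "w \<in> lang X \<longleftrightarrow> (\<exists>x\<in>X. word_at x j (length w) = w)"
proof
  assume "w \<in> lang X"
  then obtain x i where x: "x \<in> X" and w: "word_at x i (length w) = w"
    by (auto simp: lang_iff_word_at)
  have "shift (j - i) x \<in> X"
    using assms x by (simp add: shift_invariant_def)
  moreover have "word_at x i (length w) = word_at (shift (j - i) x) j (length w)"
    by (simp add: word_at_shift)
  ultimately show "\<exists>x\<in>X. word_at x j (length w) = w"
    using w by metis
qed (auto simp: lang_iff_word_at)

lemma append_in_lang_iff:
  assumes "shift_invariant X"
  shows "u @ w \<in> lang X \<longleftrightarrow>
    (\<exists>x\<in>X. word_at x (- int (length u)) (length u) = u \<and> word_at x 0 (length w) = w)"
  using lang_shift_invariant_iff[OF assms, of "u @ w" "- int (length u)"]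
  by (auto simp: word_at_add append_eq_append_conv)

definition follower_set :: "(int \<Rightarrow> 'a) set \<Rightarrow> 'a list \<Rightarrow> 'a list set" where
  "follower_set X u = {w. u @ w \<in> lang X}"

definition predecessor_set :: "(int \<Rightarrow> 'a) set \<Rightarrow> 'a list \<Rightarrow> 'a list set" where
  "predecessor_set X v = {w. w @ v \<in> lang X}"

lemma append_in_lang_transfer:
  assumes "follower_set X u = follower_set X u'" "predecessor_set X v = predecessor_set X v'"
    and "u' @ c @ v' \<in> lang X"
  shows "u @ c @ v \<in> lang X"
proof -
  have "(u' @ c) @ v \<in> lang X"
    using assms(2,3) unfolding predecessor_set_def set_eq_iff mem_Collect_eq by (metis append_assoc)
  then have "u' @ (c @ v) \<in> lang X"
    by simp
  then show ?thesis
    using assms(1) unfolding follower_set_def set_eq_iff mem_Collect_eq by blast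
qed

lemma W_subshift_if_finite_follower_predecessor_sets:
  assumes irr: "irreducible_shift X"
    and fin: "finite (follower_set X ` lang X)" "finite (predecessor_set X ` lang X)"
  shows "W_subshift X"
proof -
  define S where "S = follower_set X ` lang X \<times> predecessor_set X ` lang X"
  have "\<forall>p\<in>S. \<exists>c. c \<in> lang X \<and> (\<forall>u\<in>lang X. \<forall>v\<in>lang X.
          (follower_set X u, predecessor_set X v) = p \<longrightarrow> u @ c @ v \<in> lang X)"
  proof
    fix p assume "p \<in> S"
    then obtain u' v' where "u' \<in> lang X" "v' \<in> lang X"
      and p: "p = (follower_set X u', predecessor_set X v')"
      unfolding S_def by blast
    with irr obtain c where "c \<in> lang X" "u' @ c @ v' \<in> lang X"
      unfolding irreducible_shift_def by blast
    then show "\<exists>c. c \<in> lang X \<and> (\<forall>u\<in>lang X. \<forall>v\<in>lang X.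
          (follower_set X u, predecessor_set X v) = p \<longrightarrow> u @ c @ v \<in> lang X)"
      using p append_in_lang_transfer by blast
  qed
  from bchoice[OF this] obtain c where c: "\<forall>p\<in>S. c p \<in> lang X \<and> (\<forall>u\<in>lang X. \<forall>v\<in>lang X.
          (follower_set X u, predecessor_set X v) = p \<longrightarrow> u @ c p @ v \<in> lang X)" ..
  have "finite S"
    using fin by (simp add: S_def)
  show ?thesis
    unfolding W_subshift_def
  proof (intro exI ballI)
    fix u v assume u: "u \<in> lang X" and v: "v \<in> lang X"
    define p where "p = (follower_set X u, predecessor_set X v)"
    have "p \<in> S"
      using u v by (simp add: S_def p_def)
    then have "c p \<in> lang X" "u @ c p @ v \<in> lang X" "length (c p) \<le> Max ((length \<circ> c) ` S)"
      using c u v \<open>finite S\<close> by (auto simp: p_def)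
    then show "\<exists>c'\<in>lang X. length c' \<le> Max ((length \<circ> c) ` S) \<and> u @ c' @ v \<in> lang X"
      by blast
  qed
qed

lemma cluster_point_in_closed_cfg:
  assumes "finite B" "Y \<subseteq> full_shift B" "closed_cfg Y" "\<And>n. s n \<in> Y"
  shows "\<exists>y\<in>Y. \<forall>N::nat. \<exists>m\<ge>N. \<forall>i. \<bar>i\<bar> \<le> int N \<longrightarrow> s m i = y i"
proof -
  define window where "window n m = restrict (s m) {- int n..int n}" for n m
  have refine: "\<exists>J'. infinite J' \<and> J' \<subseteq> J \<and> (\<forall>a\<in>J'. \<forall>b\<in>J'. window n a = window n b)"
    if "infinite J" for J :: "nat set" and n
  proof -
    have "window n ` J \<subseteq> {- int n..int n} \<rightarrow>\<^sub>E B"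
      using assms(2,4) by (auto simp: window_def full_shift_def subset_iff)
    then have "finite (window n ` J)"
      by (rule finite_subset) (simp add: finite_PiE assms(1))
    from pigeonhole_infinite[OF that this] obtain a0 where
      "infinite {a \<in> J. window n a = window n a0}" by blast
    then show ?thesis by (intro exI[of _ "{a \<in> J. window n a = window n a0}"]) auto
  qed
  obtain J where J: "\<And>n. infinite (J n)" "\<And>n. J (Suc n) \<subseteq> J n"
    and const: "\<And>n a b. a \<in> J (Suc n) \<Longrightarrow> b \<in> J (Suc n) \<Longrightarrow> window n a = window n b"
    using dependent_nat_choice[of "\<lambda>_ J. infinite J"
        "\<lambda>n J J'. J' \<subseteq> J \<and> (\<forall>a\<in>J'. \<forall>b\<in>J'. window n a = window n b)"] refine
    by (metis infinite_UNIV_nat)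
  have "\<forall>n. \<exists>m. m \<in> J (Suc n)"
    using J(1) by (metis finite.emptyI ex_in_conv)
  then obtain pick where pick: "\<And>n. pick n \<in> J (Suc n)"
    by metis
  define y where "y i = s (pick (nat \<bar>i\<bar>)) i" for i
  have agree: "s m i = y i" if "m \<in> J (Suc N)" "\<bar>i\<bar> \<le> int N" for m N i
  proof -
    define n where "n = nat \<bar>i\<bar>"
    have "J (Suc N) \<subseteq> J (Suc n)"
      using that(2) unfolding n_def by (intro lift_Suc_antimono_le[of J, OF J(2)]) linarith
    then have "window n m = window n (pick n)"
      using that(1) pick by (blast intro: const)
    moreover have "i \<in> {- int n..int n}"
      unfolding n_def by auto
    ultimately show ?thesis
      unfolding y_def n_def[symmetric] window_def by (metis restrict_apply')
  qed
  have late: "\<exists>m\<ge>N. m \<in> J (Suc N)" for N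
    using J(1) unfolding infinite_nat_iff_unbounded_le by blast
  have "y \<in> Y"
  proof (rule assms(3)[unfolded closed_cfg_def, rule_format])
    fix F :: "int set" assume "finite F"
    then obtain k where k: "abs ` F \<subseteq> {..k}"
      by (auto simp: finite_int_iff_bounded_le)
    obtain m where "m \<in> J (Suc (nat k))"
      using late by blast
    moreover have "\<bar>i\<bar> \<le> int (nat k)" if "i \<in> F" for i
      using k that by fastforce
    ultimately have "\<forall>i\<in>F. s m i = y i"
      by (blast intro: agree)
    then show "\<exists>z\<in>Y. \<forall>i\<in>F. z i = y i"
      using assms(4) by blast
  qed
  moreover have "\<exists>m\<ge>N. \<forall>i. \<bar>i\<bar> \<le> int N \<longrightarrow> s m i = y i" for N
    using late[of N] agree by auto
  ultimately show ?thesis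
    by blast
qed

lemma cont_cfg_uniform:
  assumes "finite B" "Y \<subseteq> full_shift B" "closed_cfg Y" "cont_cfg Y \<phi>"
  shows "\<exists>M::nat. \<forall>y\<in>Y. \<forall>z\<in>Y. (\<forall>i. \<bar>i\<bar> \<le> int M \<longrightarrow> y i = z i) \<longrightarrow> \<phi> y 0 = \<phi> z 0"
proof (rule ccontr)
  assume "\<not> ?thesis"
  then have "\<forall>M::nat. \<exists>y z. y \<in> Y \<and> z \<in> Y \<and> (\<forall>i. \<bar>i\<bar> \<le> int M \<longrightarrow> y i = z i) \<and> \<phi> y 0 \<noteq> \<phi> z 0"
    by blast
  then obtain s t where st: "\<And>M. s M \<in> Y \<and> t M \<in> Y \<and> (\<forall>i. \<bar>i\<bar> \<le> int M \<longrightarrow> s M i = t M i) \<and>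
      \<phi> (s M) 0 \<noteq> \<phi> (t M) 0"
    by metis
  obtain y where "y \<in> Y" and y: "\<And>N. \<exists>m\<ge>N. \<forall>i. \<bar>i\<bar> \<le> int N \<longrightarrow> s m i = y i"
    using cluster_point_in_closed_cfg[OF assms(1-3), of s] st by blast
  obtain G where "finite G" and G: "\<And>z. z \<in> Y \<Longrightarrow> \<forall>i\<in>G. z i = y i \<Longrightarrow> \<phi> z 0 = \<phi> y 0"
    using assms(4) \<open>y \<in> Y\<close> unfolding cont_cfg_def by (metis finite.emptyI finite_insert insertI1)
  then obtain k where k: "abs ` G \<subseteq> {..k}"
    by (auto simp: finite_int_iff_bounded_le)
  obtain m where "m \<ge> nat k" and m: "\<forall>i. \<bar>i\<bar> \<le> int (nat k) \<longrightarrow> s m i = y i"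
    using y by blast
  have "s m i = y i" "t m i = y i" if "i \<in> G" for i
  proof -
    have "\<bar>i\<bar> \<le> int (nat k)"
      using k that by fastforce
    then have "s m i = y i" and "\<bar>i\<bar> \<le> int m"
      using m \<open>m \<ge> nat k\<close> by (blast, linarith)
    then show "s m i = y i" "t m i = y i"
      using st[of m] by auto
  qed
  then have "\<phi> (s m) 0 = \<phi> (t m) 0"
    using G st[of m] by simp
  then show False
    using st[of m] by blast
qed

text \<open>A window \<Omega> shifted to straddle the origin only sees coordinates in [-2D, 2D].\<close>

lemma SFT_splice:
  assumes Y: "Y = {x \<in> full_shift B. \<forall>g. restrict (shift g x) \<Omega> \<in> P}"
    and D: "\<forall>h\<in>\<Omega>. \<bar>h\<bar> \<le> int D"
    and "y1 \<in> Y" "y2 \<in> Y" and agree: "\<And>i. \<bar>i\<bar> \<le> 2 * int D \<Longrightarrow> y1 i = y2 i"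
  shows "(\<lambda>i. if i \<le> 0 then y1 i else y2 i) \<in> Y"
proof -
  let ?z = "\<lambda>i. if i \<le> 0 then y1 i else y2 i"
  have "restrict (shift g ?z) \<Omega> \<in> P" for g
  proof (cases "- g > int D")
    case True
    then have "restrict (shift g ?z) \<Omega> = restrict (shift g y2) \<Omega>"
      using D by (intro restrict_ext) (force simp: shift_def)
    then show ?thesis
      using \<open>y2 \<in> Y\<close> Y by simp
  next
    case False
    then have "restrict (shift g ?z) \<Omega> = restrict (shift g y1) \<Omega>"
      using D by (intro restrict_ext) (auto simp: shift_def intro!: agree[symmetric])
    then show ?thesis
      using \<open>y1 \<in> Y\<close> Y by simp
  qed
  moreover have "?z \<in> full_shift B"
    using \<open>y1 \<in> Y\<close> \<open>y2 \<in> Y\<close> Y by (simp add: full_shift_def)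
  ultimately show ?thesis
    using Y by blast
qed

lemma finite_image_if_factors_through:
  assumes "finite (g ` S)" and "\<And>x y. x \<in> S \<Longrightarrow> y \<in> S \<Longrightarrow> g x = g y \<Longrightarrow> f x = f y"
  shows "finite (f ` S)"
proof -
  define h where "h c = f (SOME x. x \<in> S \<and> g x = c)" for c
  have "f x = h (g x)" if "x \<in> S" for x
  proof -
    have "(SOME x'. x' \<in> S \<and> g x' = g x) \<in> S \<and> g (SOME x'. x' \<in> S \<and> g x' = g x) = g x"
      using someI[of "\<lambda>x'. x' \<in> S \<and> g x' = g x" x] that by blast
    then show ?thesis
      unfolding h_def using assms(2) that by metis
  qed
  then have "f ` S = (\<lambda>x. h (g x)) ` S"
    by (rule image_cong[OF refl])
  then show ?thesis
    using finite_imageI[OF assms(1), of h] by (simp add: image_image)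
qed

locale SFT_factor =
  fixes Y :: "(int \<Rightarrow> 'b) set" and B :: "'b set" and \<Omega> :: "int set" and P
    and \<phi> :: "(int \<Rightarrow> 'b) \<Rightarrow> int \<Rightarrow> 'a" and M D :: nat
  assumes finite_alphabet: "finite B"
    and SFT_eq: "Y = {y \<in> full_shift B. \<forall>g. restrict (shift g y) \<Omega> \<in> P}"
    and window_bound: "\<forall>h\<in>\<Omega>. \<bar>h\<bar> \<le> int D"
    and shift_invariant_cover: "shift_invariant Y"
    and equivariant: "\<forall>g. \<forall>y\<in>Y. \<phi> (shift g y) = shift g (\<phi> y)"
    and block_radius: "\<forall>y\<in>Y. \<forall>z\<in>Y. (\<forall>i. \<bar>i\<bar> \<le> int M \<longrightarrow> y i = z i) \<longrightarrow> \<phi> y 0 = \<phi> z 0"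
begin

lemma shift_in_cover: "y \<in> Y \<Longrightarrow> shift g y \<in> Y"
  using shift_invariant_cover by (simp add: shift_invariant_def)

lemma shift_invariant_image: "shift_invariant (\<phi> ` Y)"
  unfolding shift_invariant_def
proof (intro allI ballI)
  fix g x assume "x \<in> \<phi> ` Y"
  then obtain y where "y \<in> Y" "x = \<phi> y"
    by blast
  then have "shift g x = \<phi> (shift g y)"
    using equivariant by simp
  then show "shift g x \<in> \<phi> ` Y"
    using shift_in_cover \<open>y \<in> Y\<close> by blast
qed

lemma factor_local:
  assumes "y \<in> Y" "z \<in> Y" and agree: "\<And>i. \<bar>i - k\<bar> \<le> int M \<Longrightarrow> y i = z i"
  shows "\<phi> y k = \<phi> z k"
proof -
  have "\<phi> y k = shift (- k) (\<phi> y) 0"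
    by (simp add: shift_def)
  also have "\<dots> = \<phi> (shift (- k) y) 0"
    using equivariant assms(1) by simp
  also have "\<dots> = \<phi> (shift (- k) z) 0"
  proof -
    have "\<forall>i. \<bar>i\<bar> \<le> int M \<longrightarrow> shift (- k) y i = shift (- k) z i"
      using agree by (simp add: shift_def)
    then show ?thesis
      using block_radius shift_in_cover assms(1,2) by blast
  qed
  also have "\<dots> = shift (- k) (\<phi> z) 0"
    using equivariant assms(2) by simp
  also have "\<dots> = \<phi> z k"
    by (simp add: shift_def)
  finally show ?thesis .
qed


text \<open>Radius M + 2D: splicing needs agreement on [-2D, 2D], and the image of the splice near the
  origin is computed from coordinates within distance M.\<close>

definition core :: "(int \<Rightarrow> 'b) \<Rightarrow> int \<Rightarrow> 'b" where
  "core y = restrict y {- int (M + 2 * D)..int (M + 2 * D)}"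

lemma factor_splice:
  assumes "y1 \<in> Y" "y2 \<in> Y" "core y1 = core y2"
  obtains z where "z \<in> Y" "\<And>i. i < 0 \<Longrightarrow> \<phi> z i = \<phi> y1 i" "\<And>i. i \<ge> 0 \<Longrightarrow> \<phi> z i = \<phi> y2 i"
proof
  have agree: "y1 i = y2 i" if "\<bar>i\<bar> \<le> int (M + 2 * D)" for i
  proof -
    have "- int (M + 2 * D) \<le> i \<and> i \<le> int (M + 2 * D)"
      using that by linarith
    then show ?thesis
      using fun_cong[OF assms(3), of i] by (simp add: core_def)
  qed
  define z where "z i = (if i \<le> 0 then y1 i else y2 i)" for i
  show "z \<in> Y"
    unfolding z_def using SFT_splice[OF SFT_eq window_bound assms(1,2)] agree by simp
  show "\<phi> z i = \<phi> y1 i" if "i < 0" for i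
    using that by (intro factor_local[OF \<open>z \<in> Y\<close> assms(1)]) (auto simp: z_def intro!: agree[symmetric])
  show "\<phi> z i = \<phi> y2 i" if "i \<ge> 0" for i
    using that by (intro factor_local[OF \<open>z \<in> Y\<close> assms(2)]) (auto simp: z_def intro!: agree)
qed


definition left_context :: "'a list \<Rightarrow> (int \<Rightarrow> 'b) set" where
  "left_context u = {core y | y. y \<in> Y \<and> word_at (\<phi> y) (- int (length u)) (length u) = u}"

definition right_context :: "'a list \<Rightarrow> (int \<Rightarrow> 'b) set" where
  "right_context v = {core y | y. y \<in> Y \<and> word_at (\<phi> y) 0 (length v) = v}"

lemma append_in_lang_image_iff:
  "u @ w \<in> lang (\<phi> ` Y) \<longleftrightarrow>
    (\<exists>y\<in>Y. word_at (\<phi> y) (- int (length u)) (length u) = u \<and> word_at (\<phi> y) 0 (length w) = w)"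
  using append_in_lang_iff[OF shift_invariant_image] by blast

lemma follower_set_mono:
  assumes "left_context u \<subseteq> left_context u'"
  shows "follower_set (\<phi> ` Y) u \<subseteq> follower_set (\<phi> ` Y) u'"
proof
  fix w assume "w \<in> follower_set (\<phi> ` Y) u"
  then obtain y where "y \<in> Y" "word_at (\<phi> y) (- int (length u)) (length u) = u"
    and w: "word_at (\<phi> y) 0 (length w) = w"
    by (auto simp: follower_set_def append_in_lang_image_iff)
  then have "core y \<in> left_context u'"
    using assms unfolding left_context_def by blast
  then obtain y' where "y' \<in> Y" "core y' = core y"
    and u': "word_at (\<phi> y') (- int (length u')) (length u') = u'"
    unfolding left_context_def by auto
  obtain z where "z \<in> Y" and left: "\<And>i. i < 0 \<Longrightarrow> \<phi> z i = \<phi> y' i"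
    and right: "\<And>i. i \<ge> 0 \<Longrightarrow> \<phi> z i = \<phi> y i"
    using factor_splice[OF \<open>y' \<in> Y\<close> \<open>y \<in> Y\<close> \<open>core y' = core y\<close>] by blast
  have "word_at (\<phi> z) (- int (length u')) (length u') = word_at (\<phi> y') (- int (length u')) (length u')"
    by (intro word_at_cong left) simp
  also note u'
  moreover have "word_at (\<phi> z) 0 (length w) = word_at (\<phi> y) 0 (length w)"
    by (intro word_at_cong right) simp
  moreover note w
  ultimately show "w \<in> follower_set (\<phi> ` Y) u'"
    using \<open>z \<in> Y\<close> by (auto simp: follower_set_def append_in_lang_image_iff)
qed


lemma predecessor_set_mono:
  assumes "right_context v \<subseteq> right_context v'"
  shows "predecessor_set (\<phi> ` Y) v \<subseteq> predecessor_set (\<phi> ` Y) v'"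
proof
  fix w assume "w \<in> predecessor_set (\<phi> ` Y) v"
  then obtain y where "y \<in> Y" and w: "word_at (\<phi> y) (- int (length w)) (length w) = w"
    and "word_at (\<phi> y) 0 (length v) = v"
    by (auto simp: predecessor_set_def append_in_lang_image_iff)
  then have "core y \<in> right_context v'"
    using assms unfolding right_context_def by blast
  then obtain y' where "y' \<in> Y" "core y' = core y"
    and v': "word_at (\<phi> y') 0 (length v') = v'"
    unfolding right_context_def by auto
  obtain z where "z \<in> Y" and left: "\<And>i. i < 0 \<Longrightarrow> \<phi> z i = \<phi> y i"
    and right: "\<And>i. i \<ge> 0 \<Longrightarrow> \<phi> z i = \<phi> y' i"
    using factor_splice[OF \<open>y \<in> Y\<close> \<open>y' \<in> Y\<close> \<open>core y' = core y\<close>[symmetric]] by blast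
  have "word_at (\<phi> z) (- int (length w)) (length w) = word_at (\<phi> y) (- int (length w)) (length w)"
    by (intro word_at_cong left) simp
  also note w
  moreover have "word_at (\<phi> z) 0 (length v') = word_at (\<phi> y') 0 (length v')"
    by (intro word_at_cong right) simp
  moreover note v'
  ultimately show "w \<in> predecessor_set (\<phi> ` Y) v'"
    using \<open>z \<in> Y\<close> by (auto simp: predecessor_set_def append_in_lang_image_iff)
qed

lemma finite_cores: "finite (Pow (core ` Y))"
proof -
  have "core ` Y \<subseteq> {- int (M + 2 * D)..int (M + 2 * D)} \<rightarrow>\<^sub>E B"
    using SFT_eq by (auto simp: core_def full_shift_def)
  then show ?thesis
    by (simp add: finite_subset finite_PiE finite_alphabet)
qed

lemma finite_follower_sets: "finite (follower_set (\<phi> ` Y) ` lang (\<phi> ` Y))"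
proof (rule finite_image_if_factors_through)
  have "left_context ` lang (\<phi> ` Y) \<subseteq> Pow (core ` Y)"
    unfolding left_context_def by blast
  then show "finite (left_context ` lang (\<phi> ` Y))"
    using finite_cores by (rule finite_subset)
qed (intro subset_antisym follower_set_mono; simp)

lemma finite_predecessor_sets: "finite (predecessor_set (\<phi> ` Y) ` lang (\<phi> ` Y))"
proof (rule finite_image_if_factors_through)
  have "right_context ` lang (\<phi> ` Y) \<subseteq> Pow (core ` Y)"
    unfolding right_context_def by blast
  then show "finite (right_context ` lang (\<phi> ` Y))"
    using finite_cores by (rule finite_subset)
qed (intro subset_antisym predecessor_set_mono; simp)

end

lemma W_subshift_if_irreducible_factor_of_SFT:
  assumes "finite B" "is_SFT B Y" "cont_cfg Y \<phi>" "\<forall>g. \<forall>y\<in>Y. \<phi> (shift g y) = shift g (\<phi> y)"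
    and "irreducible_shift (\<phi> ` Y)"
  shows "W_subshift (\<phi> ` Y)"
proof -
  obtain \<Omega> P where "subshift B Y" "finite \<Omega>"
    and Y: "Y = {y \<in> full_shift B. \<forall>g. restrict (shift g y) \<Omega> \<in> P}"
    using assms(2) unfolding is_SFT_def by (elim conjE exE) blast
  then have "Y \<subseteq> full_shift B" "closed_cfg Y" "shift_invariant Y"
    unfolding subshift_def by auto
  obtain k where "abs ` \<Omega> \<subseteq> {..k}"
    using \<open>finite \<Omega>\<close> by (auto simp: finite_int_iff_bounded_le)
  then have D: "\<forall>h\<in>\<Omega>. \<bar>h\<bar> \<le> int (nat k)"
    by fastforce
  obtain M where M: "\<forall>y\<in>Y. \<forall>z\<in>Y. (\<forall>i. \<bar>i\<bar> \<le> int M \<longrightarrow> y i = z i) \<longrightarrow> \<phi> y 0 = \<phi> z 0"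
    using cont_cfg_uniform[OF assms(1) \<open>Y \<subseteq> full_shift B\<close> \<open>closed_cfg Y\<close> assms(3)] by blast
  interpret SFT_factor Y B \<Omega> P \<phi> M "nat k"
    by unfold_locales (fact assms(1) Y D \<open>shift_invariant Y\<close> assms(4) M)+
  show ?thesis
    by (rule W_subshift_if_finite_follower_predecessor_sets[OF assms(5) finite_follower_sets
          finite_predecessor_sets])
qed

theorem proposition4p4:
  fixes A :: "'a set"
  assumes "finite A"
  shows "(\<forall>X. subshift A X \<and> sofic A X \<and> irreducible_shift X \<longrightarrow> W_subshift X) \<and>
         (\<forall>X. subshift A X \<and> is_SFT A X \<and> irreducible_shift X \<longrightarrow> W_subshift X)"
proof (intro conjI allI impI)
  fix X :: "(int \<Rightarrow> 'a) set"
  assume X: "subshift A X \<and> sofic A X \<and> irreducible_shift X"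
  then obtain B :: "nat set" and Y \<phi> where "finite B" "is_SFT B Y" "cont_cfg Y \<phi>"
    "\<forall>g. \<forall>y\<in>Y. \<phi> (shift g y) = shift g (\<phi> y)" and "\<phi> ` Y = X"
    unfolding sofic_def by (elim conjE exE) blast
  then show "W_subshift X"
    using W_subshift_if_irreducible_factor_of_SFT X by blast
next
  fix X :: "(int \<Rightarrow> 'a) set"
  assume "subshift A X \<and> is_SFT A X \<and> irreducible_shift X"
  moreover have "cont_cfg X (\<lambda>x. x)"
    unfolding cont_cfg_def by blast
  ultimately show "W_subshift X"
    using W_subshift_if_irreducible_factor_of_SFT[OF assms, of X "\<lambda>x. x"] by simp
qed

end
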